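(* Let $V$ be a finite dimensional real inner product space and let $X_1,\dots,X_n$ be self-adjoint elements of $\mathrm{End}(V)$ with $[X_i,X_j]=0$ for all $1\le i,j\le n$. Then there exists a constant $C>0$ such that for all $v\in V$ \[ C\Big(\sum_{i,j=1}^n\langle X_iv,v\rangle\langle X_jv,v\rangle\langle X_iv,X_jv\rangle\Big)^2\ \ge\ \Big(\sum_{i=1}^n\langle X_iv,v\rangle^2\Big)^3. \] *)

theory Defs
  imports "HOL-Analysis.Analysis"
begin

end

theory Submission
  imports Defs
begin

text \<open>
  Commuting self-adjoint \<open>X\<^sub>i\<close> have a common orthonormal eigenbasis \<open>B\<close>, say
  \<open>X\<^sub>i b = F\<^sub>b(i) b\<close>. With the weights \<open>p\<^sub>b = \<langle>v, b\<rangle>\<^sup>2\<close> and \<open>a = \<Sum>\<^sub>b p\<^sub>b F\<^sub>b \<in> \<real>\<^sup>n\<close> one gets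
  \<open>\<langle>X\<^sub>i v, v\<rangle> = a\<^sub>i\<close>, so the right-hand side is \<open>|a|\<^sup>6\<close> and the double sum is
  \<open>S(p) = \<Sum>\<^sub>b p\<^sub>b \<langle>a, F\<^sub>b\<rangle>\<^sup>2\<close>. It therefore suffices to find \<open>c > 0\<close> with \<open>c |a|\<^sup>6 \<le> S(p)\<^sup>2\<close>
  for all weights \<open>p \<ge> 0\<close>, by induction on the finite family \<open>(F\<^sub>b)\<close>.
  If no convex combination of the \<open>F\<^sub>b\<close> vanishes, compactness of the simplex gives
  \<open>|a|\<^sup>2 \<ge> d (\<Sum>\<^sub>b p\<^sub>b)\<^sup>2\<close>, and Cauchy-Schwarz gives
  \<open>|a|\<^sup>4 = (\<Sum>\<^sub>b p\<^sub>b \<langle>a, F\<^sub>b\<rangle>)\<^sup>2 \<le> (\<Sum>\<^sub>b p\<^sub>b) S(p)\<close>; together they yield \<open>d |a|\<^sup>6 \<le> S(p)\<^sup>2\<close>.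
  Otherwise \<open>\<Sum>\<^sub>b \<alpha>\<^sub>b F\<^sub>b = 0\<close> for a probability vector \<open>\<alpha>\<close>; subtracting from \<open>p\<close> the largest
  admissible multiple of \<open>\<alpha>\<close> leaves \<open>a\<close> unchanged, does not increase \<open>S(p)\<close> and kills one
  weight, so the bound for a smaller family applies.
\<close>

lemma quadratic_nonpos_imp_linear_coeff_zero:
  fixes r q :: real
  assumes "\<And>t. 2 * t * r + t\<^sup>2 * q \<le> 0"
  shows "r = 0"
proof (rule ccontr)
  assume "r \<noteq> 0"
  define D where "D = \<bar>q\<bar> + 1"
  define t where "t = r / D"
  have "D > 0" "-D \<le> q"
    unfolding D_def by linarith+
  then have "t\<^sup>2 * q \<ge> - (t\<^sup>2 * D)"
    using mult_left_mono[of "-D" q "t\<^sup>2"] by simp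
  moreover have "2 * t * r = 2 * r\<^sup>2 / D" "t\<^sup>2 * D = r\<^sup>2 / D"
    using \<open>D > 0\<close> by (simp_all add: t_def power2_eq_square)
  moreover have "r\<^sup>2 / D > 0"
    using \<open>r \<noteq> 0\<close> \<open>D > 0\<close> by simp
  ultimately have "2 * t * r + t\<^sup>2 * q > 0"
    by linarith
  with assms[of t] show False
    by simp
qed

lemma selfadjoint_eigenvector_in_invariant_subspace:
  fixes f :: "'a::euclidean_space \<Rightarrow> 'a"
  assumes f: "linear f" and sym: "\<And>u w. f u \<bullet> w = u \<bullet> f w"
    and W: "subspace W" and inv: "\<And>u. u \<in> W \<Longrightarrow> f u \<in> W" and "W \<noteq> {0}"
  shows "\<exists>v\<in>W. norm v = 1 \<and> f v = (f v \<bullet> v) *\<^sub>R v"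
proof -
  let ?S = "W \<inter> sphere 0 1"
  obtain u where "u \<in> W" "u \<noteq> 0"
    using \<open>W \<noteq> {0}\<close> W subspace_0 by blast
  then have "u /\<^sub>R norm u \<in> ?S"
    using W by (simp add: subspace_scale)
  moreover have "compact ?S"
    using closed_subspace[OF W] by (simp add: closed_Int_compact)
  moreover have "continuous_on ?S (\<lambda>x. f x \<bullet> x)"
    using f by (intro continuous_intros linear_continuous_on) (simp add: linear_conv_bounded_linear)
  ultimately obtain v where "v \<in> ?S" and v_max: "\<And>y. y \<in> ?S \<Longrightarrow> f y \<bullet> y \<le> f v \<bullet> v"
    using continuous_attains_sup[of ?S "\<lambda>x. f x \<bullet> x"] by blast
  then have v: "v \<in> W" "norm v = 1"
    by auto
  define \<mu> where "\<mu> = f v \<bullet> v"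
  have bound: "f y \<bullet> y \<le> \<mu> * (y \<bullet> y)" if "y \<in> W" for y
  proof (cases "y = 0")
    case False
    have "y /\<^sub>R norm y \<in> ?S"
      using that False W by (simp add: subspace_scale)
    then have "f (y /\<^sub>R norm y) \<bullet> (y /\<^sub>R norm y) \<le> \<mu>"
      using v_max \<mu>_def by blast
    then have "(f y \<bullet> y) / (norm y)\<^sup>2 \<le> \<mu>"
      using linear_scale[OF f] by (simp add: power2_eq_square divide_inverse mult_ac)
    then show ?thesis
      using False by (simp add: divide_le_eq power2_norm_eq_inner)
  qed (simp add: linear_0[OF f])
  txt \<open>The quadratic \<open>t \<mapsto> \<langle>f(v + t w), v + t w\<rangle> - \<mu> |v + t w|\<^sup>2\<close> is nonpositive and
    vanishes at \<open>0\<close>, so its linear coefficient \<open>2 \<langle>f v - \<mu> v, w\<rangle>\<close> vanishes.\<close>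
  have orth: "(f v - \<mu> *\<^sub>R v) \<bullet> w = 0" if w: "w \<in> W" for w
  proof (rule quadratic_nonpos_imp_linear_coeff_zero)
    fix t :: real
    have "v + t *\<^sub>R w \<in> W"
      using W v w by (simp add: subspace_add subspace_scale)
    from bound[OF this]
    have "f v \<bullet> v + 2 * t * (f v \<bullet> w) + t\<^sup>2 * (f w \<bullet> w)
        \<le> \<mu> * (v \<bullet> v + 2 * t * (v \<bullet> w) + t\<^sup>2 * (w \<bullet> w))"
      using sym[of w v] linear_add[OF f] linear_scale[OF f]
      by (simp add: inner_add_left inner_add_right inner_commute power2_eq_square algebra_simps)
    moreover have "v \<bullet> v = 1"
      using v by (simp add: norm_eq_1)
    ultimately show "2 * t * ((f v - \<mu> *\<^sub>R v) \<bullet> w) + t\<^sup>2 * (f w \<bullet> w - \<mu> * (w \<bullet> w)) \<le> 0"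
      by (simp add: \<mu>_def inner_diff_left algebra_simps)
  qed
  have "f v - \<mu> *\<^sub>R v \<in> W"
    using W v inv by (simp add: subspace_diff subspace_scale)
  from orth[OF this] have "f v = \<mu> *\<^sub>R v"
    by simp
  then show ?thesis
    using v \<mu>_def by blast
qed

lemma commuting_selfadjoint_common_eigenvector:
  fixes X :: "'i \<Rightarrow> 'a::euclidean_space \<Rightarrow> 'a"
  assumes "finite I"
    and "\<And>i. i \<in> I \<Longrightarrow> linear (X i)"
    and "\<And>i u w. i \<in> I \<Longrightarrow> X i u \<bullet> w = u \<bullet> X i w"
    and "\<And>i j u. i \<in> I \<Longrightarrow> j \<in> I \<Longrightarrow> X i (X j u) = X j (X i u)"
    and "subspace W" "\<And>i u. i \<in> I \<Longrightarrow> u \<in> W \<Longrightarrow> X i u \<in> W" "W \<noteq> {0}"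
  shows "\<exists>v\<in>W. norm v = 1 \<and> (\<forall>i\<in>I. X i v = (X i v \<bullet> v) *\<^sub>R v)"
  using assms
proof (induction I arbitrary: W rule: finite_induct)
  case empty
  then obtain u where "u \<in> W" "u \<noteq> 0"
    using subspace_0 by blast
  then show ?case
    using empty.prems(4) by (intro bexI[of _ "u /\<^sub>R norm u"]) (simp_all add: subspace_scale)
next
  case (insert j I)
  have "linear (X j)" "\<And>u w. X j u \<bullet> w = u \<bullet> X j w" "\<And>u. u \<in> W \<Longrightarrow> X j u \<in> W"
    using insert.prems(1,2,5) by blast+
  then obtain v0 where "v0 \<in> W" "norm v0 = 1" "X j v0 = (X j v0 \<bullet> v0) *\<^sub>R v0"
    using selfadjoint_eigenvector_in_invariant_subspace[of "X j" W] insert.prems(4,6) by blast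
  define \<mu> where "\<mu> = X j v0 \<bullet> v0"
  define E where "E = W \<inter> {u. X j u - \<mu> *\<^sub>R u = 0}"
  have "linear (\<lambda>u. X j u - \<mu> *\<^sub>R u)"
    using \<open>linear (X j)\<close> by (intro linear_compose_sub linear_scale_self)
  then have "subspace E"
    unfolding E_def using insert.prems(4) by (intro subspace_inter linear_subspace_kernel)
  moreover have "X i u \<in> E" if "i \<in> I" "u \<in> E" for i u
  proof -
    have "X j (X i u) = X i (X j u)"
      using insert.prems(3)[of j i u] that(1) by simp
    also have "\<dots> = \<mu> *\<^sub>R X i u"
      using that insert.prems(1)[of i] by (simp add: E_def linear_scale)
    finally show ?thesis
      using that insert.prems(5)[of i u] by (simp add: E_def)
  qed
  moreover have "v0 \<in> E"
    using \<open>v0 \<in> W\<close> \<open>X j v0 = _\<close> by (simp add: E_def \<mu>_def)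
  then have "E \<noteq> {0}"
    using \<open>norm v0 = 1\<close> by auto
  moreover have "\<And>i. i \<in> I \<Longrightarrow> linear (X i)" "\<And>i u w. i \<in> I \<Longrightarrow> X i u \<bullet> w = u \<bullet> X i w"
    "\<And>i i' u. i \<in> I \<Longrightarrow> i' \<in> I \<Longrightarrow> X i (X i' u) = X i' (X i u)"
    using insert.prems(1-3) by blast+
  ultimately have "\<exists>v\<in>E. norm v = 1 \<and> (\<forall>i\<in>I. X i v = (X i v \<bullet> v) *\<^sub>R v)"
    using insert.IH[of E] by blast
  then obtain v where v: "v \<in> E" "norm v = 1" "\<forall>i\<in>I. X i v = (X i v \<bullet> v) *\<^sub>R v"
    by blast
  moreover have "v \<bullet> v = 1"
    using v by (simp add: norm_eq_1)
  ultimately show ?case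
    by (intro bexI[of _ v]) (auto simp: E_def)
qed

lemma dim_orthogonal_slice_less:
  fixes v :: "'a::euclidean_space"
  assumes "subspace W" "v \<in> W" "v \<noteq> 0"
  shows "dim (W \<inter> {u. v \<bullet> u = 0}) < dim W"
proof (rule dim_psubset)
  have "v \<notin> W \<inter> {u. v \<bullet> u = 0}"
    using assms(3) by simp
  then have "W \<inter> {u. v \<bullet> u = 0} \<subset> W"
    using assms(2) by blast
  moreover have "subspace (W \<inter> {u. v \<bullet> u = 0})"
    using assms(1) by (intro subspace_inter subspace_hyperplane)
  then have "span (W \<inter> {u. v \<bullet> u = 0}) = W \<inter> {u. v \<bullet> u = 0}" "span W = W"
    using assms(1) by simp_all
  ultimately show "span (W \<inter> {u. v \<bullet> u = 0}) \<subset> span W"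
    by (simp only:)
qed

lemma subspace_subset_span_insert_orthogonal_slice:
  fixes v :: "'a::euclidean_space"
  assumes "subspace W" "v \<in> W" "norm v = 1" "W \<inter> {u. v \<bullet> u = 0} \<subseteq> span B"
  shows "W \<subseteq> span (insert v B)"
proof
  fix w assume "w \<in> W"
  have "v \<bullet> v = 1"
    using assms(3) by (simp add: norm_eq_1)
  with \<open>w \<in> W\<close> have "w - (v \<bullet> w) *\<^sub>R v \<in> W \<inter> {u. v \<bullet> u = 0}"
    using assms(1,2) by (simp add: subspace_diff subspace_scale inner_diff_right)
  then have "w - (v \<bullet> w) *\<^sub>R v \<in> span (insert v B)"
    using assms(4) span_mono[of B "insert v B"] by blast
  then have "w - (v \<bullet> w) *\<^sub>R v + (v \<bullet> w) *\<^sub>R v \<in> span (insert v B)"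
    using span_add span_scale span_base[OF insertI1] by blast
  then show "w \<in> span (insert v B)"
    by simp
qed

lemma commuting_selfadjoint_orthonormal_eigenbasis:
  fixes X :: "'i \<Rightarrow> 'a::euclidean_space \<Rightarrow> 'a"
  assumes I: "finite I"
    and lin: "\<And>i. i \<in> I \<Longrightarrow> linear (X i)"
    and sym: "\<And>i u w. i \<in> I \<Longrightarrow> X i u \<bullet> w = u \<bullet> X i w"
    and comm: "\<And>i j u. i \<in> I \<Longrightarrow> j \<in> I \<Longrightarrow> X i (X j u) = X j (X i u)"
    and "subspace W" "\<And>i u. i \<in> I \<Longrightarrow> u \<in> W \<Longrightarrow> X i u \<in> W"
  shows "\<exists>B. finite B \<and> B \<subseteq> W \<and> pairwise orthogonal B \<and> W \<subseteq> span B \<and>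
    (\<forall>b\<in>B. norm b = 1 \<and> (\<forall>i\<in>I. X i b = (X i b \<bullet> b) *\<^sub>R b))"
  using assms(5,6)
proof (induction "dim W" arbitrary: W rule: less_induct)
  case less
  show ?case
  proof (cases "W = {0}")
    case True
    then show ?thesis
      by (intro exI[of _ "{}"]) auto
  next
    case False
    have "\<exists>v\<in>W. norm v = 1 \<and> (\<forall>i\<in>I. X i v = (X i v \<bullet> v) *\<^sub>R v)"
      using I lin sym comm less.prems False by (rule commuting_selfadjoint_common_eigenvector)
    then obtain v where v: "v \<in> W" "norm v = 1" "\<forall>i\<in>I. X i v = (X i v \<bullet> v) *\<^sub>R v"
      by blast
    define W' where "W' = W \<inter> {u. v \<bullet> u = 0}"
    have "subspace W'"
      unfolding W'_def using less.prems(1) by (intro subspace_inter subspace_hyperplane)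
    moreover have "X i u \<in> W'" if "i \<in> I" "u \<in> W'" for i u
    proof -
      have "v \<bullet> X i u = X i v \<bullet> u"
        using sym[OF that(1), of v u] by simp
      also have "\<dots> = (X i v \<bullet> v) * (v \<bullet> u)"
        using v(3) that(1) by (metis inner_scaleR_left)
      also have "\<dots> = 0"
        using that(2) by (simp add: W'_def)
      finally show ?thesis
        using less.prems(2) that by (simp add: W'_def)
    qed
    moreover have "dim W' < dim W"
      unfolding W'_def using less.prems(1) v(1,2) by (intro dim_orthogonal_slice_less) auto
    ultimately have "\<exists>B. finite B \<and> B \<subseteq> W' \<and> pairwise orthogonal B \<and> W' \<subseteq> span B \<and>
        (\<forall>b\<in>B. norm b = 1 \<and> (\<forall>i\<in>I. X i b = (X i b \<bullet> b) *\<^sub>R b))"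
      by (intro less.hyps) auto
    then obtain B where B: "finite B" "B \<subseteq> W'" "pairwise orthogonal B" "W' \<subseteq> span B"
        "\<forall>b\<in>B. norm b = 1 \<and> (\<forall>i\<in>I. X i b = (X i b \<bullet> b) *\<^sub>R b)"
      by blast
    have "orthogonal v b" "orthogonal b v" if "b \<in> B" for b
      using B(2) that by (auto simp: W'_def orthogonal_def inner_commute)
    then have "pairwise orthogonal (insert v B)"
      using B(3) by (simp add: pairwise_insert)
    moreover have "W \<subseteq> span (insert v B)"
      using less.prems(1) v(1,2) B(4) unfolding W'_def by (rule subspace_subset_span_insert_orthogonal_slice)
    moreover have "insert v B \<subseteq> W"
      using B(2) v(1) by (auto simp: W'_def)
    ultimately show ?thesis
      using B(1,5) v(2,3) by (intro exI[of _ "insert v B"]) simp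
  qed
qed

definition wsum :: "'b set \<Rightarrow> ('b \<Rightarrow> real) \<Rightarrow> ('b \<Rightarrow> 'i \<Rightarrow> real) \<Rightarrow> 'i \<Rightarrow> real"
  where "wsum K p F i = (\<Sum>b\<in>K. p b * F b i)"

definition wsum_sqnorm :: "'i set \<Rightarrow> 'b set \<Rightarrow> ('b \<Rightarrow> real) \<Rightarrow> ('b \<Rightarrow> 'i \<Rightarrow> real) \<Rightarrow> real"
  where "wsum_sqnorm I K p F = (\<Sum>i\<in>I. (wsum K p F i)\<^sup>2)"

definition wsum_spread :: "'i set \<Rightarrow> 'b set \<Rightarrow> ('b \<Rightarrow> real) \<Rightarrow> ('b \<Rightarrow> 'i \<Rightarrow> real) \<Rightarrow> real"
  where "wsum_spread I K p F = (\<Sum>b\<in>K. p b * (\<Sum>i\<in>I. wsum K p F i * F b i)\<^sup>2)"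

lemma wsum_sqnorm_nonneg: "0 \<le> wsum_sqnorm I K p F"
  unfolding wsum_sqnorm_def by (simp add: sum_nonneg)

lemma wsum_spread_nonneg: "(\<And>b. b \<in> K \<Longrightarrow> 0 \<le> p b) \<Longrightarrow> 0 \<le> wsum_spread I K p F"
  unfolding wsum_spread_def by (simp add: sum_nonneg)

lemma wsum_cong: "(\<And>b. b \<in> K \<Longrightarrow> p b = q b) \<Longrightarrow> wsum K p F = wsum K q F"
  unfolding wsum_def by (auto intro: sum.cong)

lemma wsum_divide: "wsum K (\<lambda>b. p b / s) F i = wsum K p F i / s"
  unfolding wsum_def by (simp add: sum_divide_distrib)

lemma wsum_remove_zero_weight:
  assumes "finite K" "p b = 0"
  shows "wsum K p F = wsum (K - {b}) p F"
  using assms by (cases "b \<in> K") (auto simp: wsum_def fun_eq_iff sum.remove)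

lemma wsum_sqnorm_eq_sum_inner:
  "wsum_sqnorm I K p F = (\<Sum>b\<in>K. p b * (\<Sum>i\<in>I. wsum K p F i * F b i))"
proof -
  have "wsum_sqnorm I K p F = (\<Sum>i\<in>I. \<Sum>b\<in>K. p b * (wsum K p F i * F b i))"
    unfolding wsum_sqnorm_def power2_eq_square
    by (simp add: wsum_def[of K p F] sum_distrib_left mult.left_commute)
  also have "\<dots> = (\<Sum>b\<in>K. p b * (\<Sum>i\<in>I. wsum K p F i * F b i))"
    by (subst sum.swap) (simp add: sum_distrib_left)
  finally show ?thesis .
qed

lemma weighted_Cauchy_Schwarz:
  fixes p x :: "'b \<Rightarrow> real"
  assumes "\<And>b. b \<in> K \<Longrightarrow> 0 \<le> p b"
  shows "(\<Sum>b\<in>K. p b * x b)\<^sup>2 \<le> sum p K * (\<Sum>b\<in>K. p b * (x b)\<^sup>2)"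
proof -
  have "(\<Sum>b\<in>K. sqrt (p b) * (sqrt (p b) * x b))\<^sup>2
      \<le> (\<Sum>b\<in>K. (sqrt (p b))\<^sup>2) * (\<Sum>b\<in>K. (sqrt (p b) * x b)\<^sup>2)"
    by (rule Cauchy_Schwarz_ineq_sum)
  also have "\<dots> = sum p K * (\<Sum>b\<in>K. p b * (x b)\<^sup>2)"
    using assms by (simp add: power_mult_distrib)
  finally show ?thesis
    using assms by (simp add: mult.assoc[symmetric])
qed

lemma wsum_sqnorm_squared_le_spread:
  "(\<And>b. b \<in> K \<Longrightarrow> 0 \<le> p b) \<Longrightarrow> (wsum_sqnorm I K p F)\<^sup>2 \<le> sum p K * wsum_spread I K p F"
  unfolding wsum_sqnorm_eq_sum_inner wsum_spread_def by (rule weighted_Cauchy_Schwarz)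

lemma cube_le_square_if_sandwiched:
  fixes A S s d :: real
  assumes "0 \<le> A" "0 < d" "d * s\<^sup>2 \<le> A" "A\<^sup>2 \<le> s * S"
  shows "d * A ^ 3 \<le> S\<^sup>2"
proof (cases "A = 0")
  case False
  have "d * A ^ 4 \<le> d * (s * S)\<^sup>2"
    using assms power_mono[OF assms(4), of 2] by (simp add: power_mult[symmetric])
  also have "\<dots> = (d * s\<^sup>2) * S\<^sup>2"
    by (simp add: power_mult_distrib)
  also have "\<dots> \<le> A * S\<^sup>2"
    using assms(3) by (rule mult_right_mono) simp
  finally have "A * (d * A ^ 3) \<le> A * S\<^sup>2"
    by (simp add: power_numeral_reduce algebra_simps)
  then show ?thesis
    using False assms(1) by simp
qed (use assms in simp)

text \<open>Weights outside \<open>K\<close> are pinned to \<open>0\<close>, so that the simplex is compact in the product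
  topology of \<open>'b \<Rightarrow> real\<close>.\<close>

definition weight_simplex :: "'b set \<Rightarrow> ('b \<Rightarrow> real) set"
  where "weight_simplex K = {p \<in> (\<Pi>\<^sub>E b\<in>UNIV. if b \<in> K then {0..1} else {0}). sum p K = 1}"

lemma compact_weight_simplex:
  fixes K :: "'b set"
  shows "compact (weight_simplex K)"
proof -
  have "compactin (product_topology (\<lambda>_. euclidean) UNIV)
      (\<Pi>\<^sub>E b\<in>UNIV. if b \<in> K then {0..1::real} else {0})"
    by (simp add: compactin_PiE)
  then have "compact (\<Pi>\<^sub>E b\<in>UNIV. if b \<in> K then {0..1::real} else {0})"
    by (simp add: euclidean_product_topology)
  moreover have "closed {p::'b \<Rightarrow> real. sum p K = 1}"
    by (intro closed_Collect_eq continuous_intros continuous_on_product_coordinates)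
  ultimately show ?thesis
    by (simp add: weight_simplex_def Collect_conj_eq compact_Int_closed)
qed

lemma wsum_sqnorm_lower_bound:
  fixes F :: "'b \<Rightarrow> 'i \<Rightarrow> real"
  assumes K: "finite K" and I: "finite I"
    and nondegenerate: "\<And>\<alpha>. \<forall>b\<in>K. 0 \<le> \<alpha> b \<Longrightarrow> sum \<alpha> K = 1 \<Longrightarrow> \<exists>i\<in>I. wsum K \<alpha> F i \<noteq> 0"
  shows "\<exists>d>0. \<forall>p. (\<forall>b\<in>K. 0 \<le> p b) \<longrightarrow> d * (sum p K)\<^sup>2 \<le> wsum_sqnorm I K p F"
proof (cases "K = {}")
  case False
  obtain b0 where "b0 \<in> K"
    using False by blast
  then have "(\<lambda>b. if b = b0 then 1 else 0) \<in> weight_simplex K"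
    using K by (simp add: weight_simplex_def PiE_iff)
  moreover have "continuous_on (weight_simplex K) (\<lambda>p. wsum_sqnorm I K p F)"
    unfolding wsum_sqnorm_def wsum_def
    by (intro continuous_intros continuous_on_product_then_coordinatewise continuous_on_id)
  ultimately obtain p0 where p0: "p0 \<in> weight_simplex K"
    and p0_min: "\<And>q. q \<in> weight_simplex K \<Longrightarrow> wsum_sqnorm I K p0 F \<le> wsum_sqnorm I K q F"
    using continuous_attains_inf[OF compact_weight_simplex[of K]] by blast
  define d where "d = wsum_sqnorm I K p0 F"
  have "d \<noteq> 0"
  proof
    assume "d = 0"
    then have "\<forall>i\<in>I. wsum K p0 F i = 0"
      using I by (simp add: d_def wsum_sqnorm_def sum_nonneg_eq_0_iff)
    moreover have "p0 b \<in> (if b \<in> K then {0..1} else {0})" for b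
      using p0 unfolding weight_simplex_def by (blast intro: PiE_mem)
    then have "\<forall>b\<in>K. 0 \<le> p0 b"
      by (metis atLeastAtMost_iff)
    moreover have "sum p0 K = 1"
      using p0 by (simp add: weight_simplex_def)
    ultimately show False
      using nondegenerate by blast
  qed
  then have "d > 0"
    using wsum_sqnorm_nonneg[of I K p0 F] by (simp add: d_def)
  moreover have "d * (sum p K)\<^sup>2 \<le> wsum_sqnorm I K p F" if p: "\<forall>b\<in>K. 0 \<le> p b" for p
  proof (cases "sum p K = 0")
    case False
    define s where "s = sum p K"
    have "s > 0"
      using False p by (simp add: s_def sum_nonneg order_less_le)
    define q where "q b = (if b \<in> K then p b / s else 0)" for b
    have "p b \<le> s" if "b \<in> K" for b
      unfolding s_def using K p that by (intro member_le_sum) auto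
    then have "q \<in> weight_simplex K"
      using \<open>s > 0\<close> p by (auto simp: weight_simplex_def q_def PiE_iff s_def sum_divide_distrib[symmetric])
    moreover have "wsum_sqnorm I K q F = wsum_sqnorm I K p F / s\<^sup>2"
      using wsum_cong[of K q "\<lambda>b. p b / s" F]
      by (simp add: q_def wsum_sqnorm_def wsum_divide power_divide sum_divide_distrib)
    ultimately have "d \<le> wsum_sqnorm I K p F / s\<^sup>2"
      using p0_min d_def by metis
    then show ?thesis
      using \<open>s > 0\<close> by (simp add: s_def pos_le_divide_eq)
  qed (simp add: wsum_sqnorm_nonneg)
  ultimately show ?thesis by blast
qed (auto intro: exI[of _ 1] simp: wsum_sqnorm_nonneg)

lemma wsum_reduce_support:
  fixes F :: "'b \<Rightarrow> 'i \<Rightarrow> real"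
  assumes K: "finite K"
    and \<alpha>: "\<forall>b\<in>K. 0 \<le> \<alpha> b" "sum \<alpha> K = 1" "\<forall>i\<in>I. wsum K \<alpha> F i = 0"
    and p: "\<forall>b\<in>K. 0 \<le> p b"
  obtains b0 q where "b0 \<in> K" "\<forall>b\<in>K. 0 \<le> q b" "q b0 = 0"
    "\<forall>i\<in>I. wsum K q F i = wsum K p F i" "wsum_spread I K q F \<le> wsum_spread I K p F"
proof -
  define J where "J = {b\<in>K. \<alpha> b > 0}"
  have "J \<noteq> {}"
  proof
    assume "J = {}"
    then have "\<forall>b\<in>K. \<alpha> b = 0"
      using \<alpha>(1) by (force simp: J_def)
    then show False
      using \<alpha>(2) by simp
  qed
  txt \<open>\<open>t\<close> is the largest step with \<open>p - t \<alpha> \<ge> 0\<close> on \<open>K\<close>.\<close>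
  define t where "t = Min ((\<lambda>b. p b / \<alpha> b) ` J)"
  have "finite J"
    using K by (simp add: J_def)
  then have "t \<in> (\<lambda>b. p b / \<alpha> b) ` J"
    unfolding t_def using \<open>J \<noteq> {}\<close> by (intro Min_in) auto
  then obtain b0 where b0: "b0 \<in> J" "t = p b0 / \<alpha> b0"
    by blast
  have t_le: "t \<le> p b / \<alpha> b" if "b \<in> J" for b
    unfolding t_def using \<open>finite J\<close> that by simp
  have "t \<ge> 0"
    using b0 p by (simp add: J_def)
  define q where "q b = p b - t * \<alpha> b" for b
  have "0 \<le> q b" if "b \<in> K" for b
  proof (cases "\<alpha> b > 0")
    case True
    then show ?thesis
      using t_le[of b] that by (simp add: J_def q_def le_divide_eq)
  next
    case False
    then have "\<alpha> b = 0"
      using \<alpha>(1) that by force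
    then show ?thesis
      using p that by (simp add: q_def)
  qed
  moreover have "q b0 = 0"
    using b0 by (simp add: J_def q_def)
  moreover have "wsum K q F i = wsum K p F i - t * wsum K \<alpha> F i" for i
    by (simp add: wsum_def q_def left_diff_distrib sum_subtractf sum_distrib_left mult.assoc)
  then have wsum_q: "\<forall>i\<in>I. wsum K q F i = wsum K p F i"
    using \<alpha>(3) by simp
  moreover have "wsum_spread I K q F \<le> wsum_spread I K p F"
  proof -
    define Q where "Q b = (\<Sum>i\<in>I. wsum K p F i * F b i)\<^sup>2" for b
    have "wsum_spread I K q F = (\<Sum>b\<in>K. q b * Q b)"
      using wsum_q by (simp add: wsum_spread_def Q_def)
    also have "\<dots> = wsum_spread I K p F - t * (\<Sum>b\<in>K. \<alpha> b * Q b)"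
      by (simp add: wsum_spread_def Q_def q_def algebra_simps sum_subtractf sum_distrib_left)
    also have "\<dots> \<le> wsum_spread I K p F"
      using \<open>t \<ge> 0\<close> \<alpha>(1) by (simp add: Q_def sum_nonneg)
    finally show ?thesis .
  qed
  ultimately show thesis
    using b0(1) by (intro that[of b0 q]) (auto simp: J_def)
qed

definition cubic_spread_bound :: "'i set \<Rightarrow> 'b set \<Rightarrow> ('b \<Rightarrow> 'i \<Rightarrow> real) \<Rightarrow> real \<Rightarrow> bool"
  where "cubic_spread_bound I K F c \<longleftrightarrow>
    (\<forall>p. (\<forall>b\<in>K. 0 \<le> p b) \<longrightarrow> c * (wsum_sqnorm I K p F) ^ 3 \<le> (wsum_spread I K p F)\<^sup>2)"

lemma cubic_spread_bound_nondegenerate: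
  fixes F :: "'b \<Rightarrow> 'i \<Rightarrow> real"
  assumes "finite K" "finite I"
    and "\<And>\<alpha>. \<forall>b\<in>K. 0 \<le> \<alpha> b \<Longrightarrow> sum \<alpha> K = 1 \<Longrightarrow> \<exists>i\<in>I. wsum K \<alpha> F i \<noteq> 0"
  shows "\<exists>c>0. cubic_spread_bound I K F c"
proof -
  obtain d where "d > 0" and d: "\<forall>p. (\<forall>b\<in>K. 0 \<le> p b) \<longrightarrow> d * (sum p K)\<^sup>2 \<le> wsum_sqnorm I K p F"
    using wsum_sqnorm_lower_bound[OF assms] by blast
  have "d * (wsum_sqnorm I K p F) ^ 3 \<le> (wsum_spread I K p F)\<^sup>2" if "\<forall>b\<in>K. 0 \<le> p b" for p
    using that \<open>d > 0\<close> d wsum_sqnorm_squared_le_spread[of K p I F]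
    by (intro cube_le_square_if_sandwiched) (simp_all add: wsum_sqnorm_nonneg)
  then show ?thesis
    using \<open>d > 0\<close> by (auto simp: cubic_spread_bound_def)
qed

lemma cubic_spread_bound_from_subfamilies:
  fixes F :: "'b \<Rightarrow> 'i \<Rightarrow> real"
  assumes K: "finite K"
    and \<alpha>: "\<forall>b\<in>K. 0 \<le> \<alpha> b" "sum \<alpha> K = 1" "\<forall>i\<in>I. wsum K \<alpha> F i = 0"
    and sub: "\<forall>b\<in>K. \<exists>c>0. cubic_spread_bound I (K - {b}) F c"
  shows "\<exists>c>0. cubic_spread_bound I K F c"
proof -
  obtain c where c: "\<forall>b\<in>K. c b > 0 \<and> cubic_spread_bound I (K - {b}) F (c b)"
    using bchoice[OF sub] by blast
  have "K \<noteq> {}"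
    using \<alpha>(2) by auto
  define c0 where "c0 = Min (c ` K)"
  have "c0 > 0"
    using c K \<open>K \<noteq> {}\<close> by (simp add: c0_def)
  moreover have "c0 * (wsum_sqnorm I K p F) ^ 3 \<le> (wsum_spread I K p F)\<^sup>2"
    if p: "\<forall>b\<in>K. 0 \<le> p b" for p
  proof -
    obtain b0 q where b0: "b0 \<in> K" and q: "\<forall>b\<in>K. 0 \<le> q b" "q b0 = 0"
      "\<forall>i\<in>I. wsum K q F i = wsum K p F i" "wsum_spread I K q F \<le> wsum_spread I K p F"
      using wsum_reduce_support[OF K \<alpha> p] .
    note remove_b0 = wsum_remove_zero_weight[of K q b0 F, OF K q(2)]
    have sqnorm_eq: "wsum_sqnorm I K p F = wsum_sqnorm I (K - {b0}) q F"
      using q(3) remove_b0 by (simp add: wsum_sqnorm_def)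
    have spread_eq: "wsum_spread I K q F = wsum_spread I (K - {b0}) q F"
      using remove_b0 q(2) K b0 by (simp add: wsum_spread_def sum.remove)
    have "c0 * (wsum_sqnorm I K p F) ^ 3 \<le> c b0 * (wsum_sqnorm I K p F) ^ 3"
      using K b0 by (intro mult_right_mono) (simp_all add: c0_def wsum_sqnorm_nonneg)
    also have "\<dots> \<le> (wsum_spread I K q F)\<^sup>2"
      unfolding sqnorm_eq spread_eq using c b0 q(1) by (simp add: cubic_spread_bound_def)
    also have "\<dots> \<le> (wsum_spread I K p F)\<^sup>2"
      using q(1,4) wsum_spread_nonneg[of K q] by (intro power_mono) auto
    finally show ?thesis .
  qed
  ultimately show ?thesis
    by (auto simp: cubic_spread_bound_def)
qed

lemma wsum_spread_cubic_bound:
  fixes F :: "'b \<Rightarrow> 'i \<Rightarrow> real"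
  assumes "finite I" "finite K"
  shows "\<exists>c>0. cubic_spread_bound I K F c"
  using assms(2)
proof (induction K rule: finite_psubset_induct)
  case (psubset K)
  show ?case
  proof (cases "\<exists>\<alpha>. (\<forall>b\<in>K. 0 \<le> \<alpha> b) \<and> sum \<alpha> K = 1 \<and> (\<forall>i\<in>I. wsum K \<alpha> F i = 0)")
    case True
    then obtain \<alpha> where "\<forall>b\<in>K. 0 \<le> \<alpha> b" "sum \<alpha> K = 1" "\<forall>i\<in>I. wsum K \<alpha> F i = 0"
      by blast
    moreover have "\<forall>b\<in>K. \<exists>c>0. cubic_spread_bound I (K - {b}) F c"
      using psubset.IH by blast
    ultimately show ?thesis
      using psubset.hyps by (intro cubic_spread_bound_from_subfamilies)
  next
    case False
    then show ?thesis
      using psubset.hyps assms(1) by (intro cubic_spread_bound_nondegenerate) auto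
  qed
qed

lemma selfadjoint_inner_in_eigenbasis:
  fixes f :: "'a::euclidean_space \<Rightarrow> 'a"
  assumes B: "finite B" "pairwise orthogonal B" "\<And>b. b \<in> B \<Longrightarrow> norm b = 1" "UNIV \<subseteq> span B"
    and sym: "\<And>u w. f u \<bullet> w = u \<bullet> f w" and eig: "\<And>b. b \<in> B \<Longrightarrow> f b = c b *\<^sub>R b"
  shows "f v \<bullet> w = (\<Sum>b\<in>B. c b * (v \<bullet> b) * (w \<bullet> b))"
proof -
  have "f v \<bullet> w = f v \<bullet> (\<Sum>b\<in>B. (w \<bullet> b) *\<^sub>R b)"
    using orthonormal_basis_expand[OF B(2,3) _ B(1), of w] B(4) by (simp add: subset_iff)
  also have "\<dots> = (\<Sum>b\<in>B. (w \<bullet> b) * (v \<bullet> f b))"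
    by (simp add: inner_sum_right sym)
  also have "\<dots> = (\<Sum>b\<in>B. c b * (v \<bullet> b) * (w \<bullet> b))"
    using eig by (intro sum.cong) simp_all
  finally show ?thesis .
qed

lemma double_sum_eq_wsum_spread:
  "(\<Sum>i\<in>I. \<Sum>j\<in>I. wsum K p F i * wsum K p F j * (\<Sum>b\<in>K. p b * F b i * F b j))
    = wsum_spread I K p F"
proof -
  let ?a = "wsum K p F"
  have "(\<Sum>i\<in>I. \<Sum>j\<in>I. ?a i * ?a j * (\<Sum>b\<in>K. p b * F b i * F b j))
      = (\<Sum>b\<in>K. p b * (\<Sum>i\<in>I. \<Sum>j\<in>I. (?a i * F b i) * (?a j * F b j)))"
    by (simp add: sum_distrib_left sum.swap[of _ K] algebra_simps)
  also have "\<dots> = wsum_spread I K p F"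
    by (simp add: wsum_spread_def power2_eq_square sum_product)
  finally show ?thesis .
qed

lemma common_eigenbasis_inner_products:
  fixes X :: "'i \<Rightarrow> 'a::euclidean_space \<Rightarrow> 'a"
  assumes B: "finite B" "pairwise orthogonal B" "\<And>b. b \<in> B \<Longrightarrow> norm b = 1" "UNIV \<subseteq> span B"
    and sym: "\<And>i u w. i \<in> I \<Longrightarrow> X i u \<bullet> w = u \<bullet> X i w"
    and eig: "\<And>b i. b \<in> B \<Longrightarrow> i \<in> I \<Longrightarrow> X i b = F b i *\<^sub>R b"
  shows "i \<in> I \<Longrightarrow> X i v \<bullet> v = wsum B (\<lambda>b. (v \<bullet> b)\<^sup>2) F i"
    and "i \<in> I \<Longrightarrow> j \<in> I \<Longrightarrow> X i v \<bullet> X j v = (\<Sum>b\<in>B. (v \<bullet> b)\<^sup>2 * F b i * F b j)"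
proof -
  assume "i \<in> I"
  have expand: "X i v \<bullet> w = (\<Sum>b\<in>B. F b i * (v \<bullet> b) * (w \<bullet> b))" for w
    using B sym[OF \<open>i \<in> I\<close>] eig[OF _ \<open>i \<in> I\<close>] by (rule selfadjoint_inner_in_eigenbasis)
  show "X i v \<bullet> v = wsum B (\<lambda>b. (v \<bullet> b)\<^sup>2) F i"
    unfolding expand wsum_def by (intro sum.cong) (simp_all add: power2_eq_square inner_commute)
  assume "j \<in> I"
  have "X j v \<bullet> b = F b j * (v \<bullet> b)" if "b \<in> B" for b
    using sym[OF \<open>j \<in> I\<close>, of v b] eig[OF that \<open>j \<in> I\<close>] by simp
  then show "X i v \<bullet> X j v = (\<Sum>b\<in>B. (v \<bullet> b)\<^sup>2 * F b i * F b j)"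
    unfolding expand by (intro sum.cong) (simp_all add: power2_eq_square inner_commute)
qed

lemma common_eigenbasis_quadratic_sums:
  fixes X :: "'i \<Rightarrow> 'a::euclidean_space \<Rightarrow> 'a"
  assumes "finite B" "pairwise orthogonal B" "\<And>b. b \<in> B \<Longrightarrow> norm b = 1" "UNIV \<subseteq> span B"
    and "\<And>i u w. i \<in> I \<Longrightarrow> X i u \<bullet> w = u \<bullet> X i w"
    and "\<And>b i. b \<in> B \<Longrightarrow> i \<in> I \<Longrightarrow> X i b = F b i *\<^sub>R b"
  shows "(\<Sum>i\<in>I. (X i v \<bullet> v)\<^sup>2) = wsum_sqnorm I B (\<lambda>b. (v \<bullet> b)\<^sup>2) F"
    and "(\<Sum>i\<in>I. \<Sum>j\<in>I. X i v \<bullet> v * (X j v \<bullet> v) * (X i v \<bullet> X j v))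
      = wsum_spread I B (\<lambda>b. (v \<bullet> b)\<^sup>2) F"
proof -
  have "X i v \<bullet> v = wsum B (\<lambda>b. (v \<bullet> b)\<^sup>2) F i" if "i \<in> I" for i
    using assms that by (rule common_eigenbasis_inner_products(1))
  moreover have "X i v \<bullet> X j v = (\<Sum>b\<in>B. (v \<bullet> b)\<^sup>2 * F b i * F b j)" if "i \<in> I" "j \<in> I" for i j
    using assms that by (rule common_eigenbasis_inner_products(2))
  ultimately show "(\<Sum>i\<in>I. (X i v \<bullet> v)\<^sup>2) = wsum_sqnorm I B (\<lambda>b. (v \<bullet> b)\<^sup>2) F"
    and "(\<Sum>i\<in>I. \<Sum>j\<in>I. X i v \<bullet> v * (X j v \<bullet> v) * (X i v \<bullet> X j v))
      = wsum_spread I B (\<lambda>b. (v \<bullet> b)\<^sup>2) F"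
    by (simp_all add: wsum_sqnorm_def mult.assoc flip: double_sum_eq_wsum_spread)
qed

theorem theorem19:
  fixes X :: "nat \<Rightarrow> 'a::euclidean_space \<Rightarrow> 'a" and n :: nat
  assumes lin: "\<And>i. i \<in> {1..n} \<Longrightarrow> linear (X i)"
    and selfadj: "\<And>i. i \<in> {1..n} \<Longrightarrow> adjoint (X i) = X i"
    and comm: "\<And>i j. i \<in> {1..n} \<Longrightarrow> j \<in> {1..n} \<Longrightarrow> X i \<circ> X j = X j \<circ> X i"
  shows "\<exists>C>0. \<forall>v::'a.
    C * (\<Sum>i=1..n. \<Sum>j=1..n. inner (X i v) v * inner (X j v) v * inner (X i v) (X j v))\<^sup>2
      \<ge> (\<Sum>i=1..n. (inner (X i v) v)\<^sup>2) ^ 3"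
proof -
  define I where "I = {1..n}"
  define F where "F b i = X i b \<bullet> b" for b i
  have sym: "\<And>i u w. i \<in> I \<Longrightarrow> X i u \<bullet> w = u \<bullet> X i w"
    using adjoint_works lin selfadj unfolding I_def by metis
  have comm': "\<And>i j u. i \<in> I \<Longrightarrow> j \<in> I \<Longrightarrow> X i (X j u) = X j (X i u)"
    using comm unfolding I_def by (metis comp_apply)
  have "\<exists>B. finite B \<and> B \<subseteq> UNIV \<and> pairwise orthogonal B \<and> UNIV \<subseteq> span B \<and>
      (\<forall>b\<in>B. norm b = 1 \<and> (\<forall>i\<in>I. X i b = (X i b \<bullet> b) *\<^sub>R b))"
    using _ lin sym comm' subspace_UNIV
    by (rule commuting_selfadjoint_orthonormal_eigenbasis) (simp_all add: I_def)
  then obtain B where B: "finite B" "pairwise orthogonal B" "\<And>b. b \<in> B \<Longrightarrow> norm b = 1" "UNIV \<subseteq> span B"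
    and eig: "\<And>b i. b \<in> B \<Longrightarrow> i \<in> I \<Longrightarrow> X i b = F b i *\<^sub>R b"
    unfolding F_def by blast
  obtain c where "c > 0" and c: "cubic_spread_bound I B F c"
    using wsum_spread_cubic_bound[of I B F] B(1) by (auto simp: I_def)
  have "(\<Sum>i\<in>I. (X i v \<bullet> v)\<^sup>2) ^ 3
      \<le> 1 / c * (\<Sum>i\<in>I. \<Sum>j\<in>I. X i v \<bullet> v * (X j v \<bullet> v) * (X i v \<bullet> X j v))\<^sup>2" for v
    using c \<open>c > 0\<close> common_eigenbasis_quadratic_sums[where I = I and v = v, OF B sym eig]
    by (simp add: cubic_spread_bound_def field_simps)
  then show ?thesis
    using \<open>c > 0\<close> by (intro exI[of _ "1 / c"]) (simp add: I_def)
qed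

end
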